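(* For the discrete torus calculus and diagonal zweibein of the context, the antisymmetrizer $\pi=\frac12(\mathrm{id}-\tau)$ satisfies conditions (i) and (ii) (and hence defines 2-forms with $\mathrm{d}^2=0$) if and only if $\Theta_1\,R_1(\Theta_2)=\Theta_2\,R_2(\Theta_1)$, i.e. $\Theta_1\bar\partial^1\Theta_2=\Theta_2\bar\partial^2\Theta_1$.
   Context: $\Sigma=\mathbb{Z}_2\times\mathbb{Z}_2$, $x\to y$ iff $y-x\in\{(1,0),(0,1)\}$ (square connectivity), $n=2$, diagonal zweibein $e_{1,x,x+(1,0)}=\Theta_1(x)^{-1}$, $e_{2,x,x+(0,1)}=\Theta_2(x)^{-1}$ with $\Theta_a$ nowhere-vanishing, other entries $0$; inverses $e_1^{-1\,x,x+(1,0)}=\Theta_1(x)$, $e_2^{-1\,x,x+(0,1)}=\Theta_2(x)$. $R_1f(x)=f(x+(1,0))$, $R_2f(x)=f(x+(0,1))$, $\bar\partial^a=R_a-\mathrm{id}$. $F_{x,z}=\{y:x\to y\to z\}$. For $\pi(e_a\otimes e_b)=\sum\pi_{ab}{}^{cd}e_c\otimes e_d$ let $\pi_{x,z}{}^y{}_{y'}=\sum\pi_{ab}{}^{cd}e_a^{-1\,xy}e_b^{-1\,yz}e_{cxy'}e_{dy'z}$. Conditions: (i) $\sum\pi_{ab}{}^{cd}e_a^{-1\,xy}e_b^{-1\,yz}e_{cxy'}e_{dy'z'}=0$ for all $x$, $z\ne z'$, $y\in F_{x,z}$, $y'\in F_{x,z'}$; (ii) $\sum_{y\in F_{x,z}}\pi_{x,z}{}^y{}_{y'}=0$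 for all $(x,z)$ that are neither edges nor diagonal and all $y'\in F_{x,z}$. $\tau$ is the flip $e_a\otimes e_b\mapsto e_b\otimes e_a$. *)

theory Defs
  imports Main "HOL-Library.Numeral_Type" "HOL-Library.Product_Plus"
begin

type_synonym pt = "2 \<times> 2"

definition edge :: "pt \<Rightarrow> pt \<Rightarrow> bool" where
  "edge x y \<longleftrightarrow> y - x \<in> {(1,0), (0,1)}"

definition Fset :: "pt \<Rightarrow> pt \<Rightarrow> pt set" where
  "Fset x z = {y. edge x y \<and> edge y z}"

definition zb :: "(pt \<Rightarrow> 'a::field) \<Rightarrow> (pt \<Rightarrow> 'a) \<Rightarrow> nat \<Rightarrow> pt \<Rightarrow> pt \<Rightarrow> 'a" where
  "zb T1 T2 a x y =
     (if a = 1 \<and> y = x + (1,0) then inverse (T1 x)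
      else if a = 2 \<and> y = x + (0,1) then inverse (T2 x) else 0)"

definition zbinv :: "(pt \<Rightarrow> 'a::field) \<Rightarrow> (pt \<Rightarrow> 'a) \<Rightarrow> nat \<Rightarrow> pt \<Rightarrow> pt \<Rightarrow> 'a" where
  "zbinv T1 T2 a x y =
     (if a = 1 \<and> y = x + (1,0) then T1 x
      else if a = 2 \<and> y = x + (0,1) then T2 x else 0)"

definition piterm :: "(pt \<Rightarrow> 'a::field) \<Rightarrow> (pt \<Rightarrow> 'a) \<Rightarrow> (nat \<Rightarrow> nat \<Rightarrow> nat \<Rightarrow> nat \<Rightarrow> 'a)
    \<Rightarrow> pt \<Rightarrow> pt \<Rightarrow> pt \<Rightarrow> pt \<Rightarrow> pt \<Rightarrow> 'a" where
  "piterm T1 T2 P x y z y' z' =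
     (\<Sum>a\<in>{1,2}. \<Sum>b\<in>{1,2}. \<Sum>c\<in>{1,2}. \<Sum>d\<in>{1,2}.
        P a b c d * zbinv T1 T2 a x y * zbinv T1 T2 b y z * zb T1 T2 c x y' * zb T1 T2 d y' z')"

definition cond_i :: "(pt \<Rightarrow> 'a::field) \<Rightarrow> (pt \<Rightarrow> 'a) \<Rightarrow> (nat \<Rightarrow> nat \<Rightarrow> nat \<Rightarrow> nat \<Rightarrow> 'a) \<Rightarrow> bool" where
  "cond_i T1 T2 P \<longleftrightarrow>
     (\<forall>x z z'. z \<noteq> z' \<longrightarrow> (\<forall>y\<in>Fset x z. \<forall>y'\<in>Fset x z'. piterm T1 T2 P x y z y' z' = 0))"

definition cond_ii :: "(pt \<Rightarrow> 'a::field) \<Rightarrow> (pt \<Rightarrow> 'a) \<Rightarrow> (nat \<Rightarrow> nat \<Rightarrow> nat \<Rightarrow> nat \<Rightarrow> 'a) \<Rightarrow> bool" where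
  "cond_ii T1 T2 P \<longleftrightarrow>
     (\<forall>x z. \<not> edge x z \<and> x \<noteq> z \<longrightarrow>
        (\<forall>y'\<in>Fset x z. (\<Sum>y\<in>Fset x z. piterm T1 T2 P x y z y' z) = 0))"

text \<open>Antisymmetrizer pi = 1/2 (id - tau): pi(e_a (x) e_b) = 1/2 (e_a (x) e_b - e_b (x) e_a).\<close>
definition antisymmetrizer :: "nat \<Rightarrow> nat \<Rightarrow> nat \<Rightarrow> nat \<Rightarrow> 'a::field" where
  "antisymmetrizer a b c d =
     (1/2) * ((if a = c \<and> b = d then 1 else 0) - (if a = d \<and> b = c then 1 else 0))"

end

theory Submission
  imports Defs
begin

(* Contracting the inverse zweibein on an edge x -> y with the zweibein on an edge u -> v gives
   zero unless both edges point in the same direction.  The antisymmetrizer term is a difference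
   of two products of such contractions, so if it is nonzero the paths x -> y -> z and
   x -> y' -> z' have the same total displacement, i.e. z = z': condition (i) always holds.
   On Z_2 x Z_2 the only pairs relevant to (ii) are z = x + (1,1), and there the sum over the
   two paths is (1 - r)/2 resp. (1 - 1/r)/2 with
   r = Theta_2(x) Theta_1(x+(0,1)) / (Theta_1(x) Theta_2(x+(1,0))), which vanishes iff r = 1. *)

lemma pt_add_twice: "(x::pt) + d + d = x"
proof -
  have "(2::2) = 0" by simp
  then have "(a::2) + a = 0" for a by (metis mult_2 mult_zero_left)
  then show ?thesis by (simp add: add.assoc prod_eq_iff)
qed

lemma edge_iff: "edge x y \<longleftrightarrow> y = x + (1,0) \<or> y = x + (0,1)"
  unfolding edge_def by (auto simp: algebra_simps)

lemma Fset_eq: "Fset x z = (if z = x \<or> z = x + (1,1) then {x + (1,0), x + (0,1)} else {})"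
  unfolding Fset_def edge_iff
  by (auto simp: pt_add_twice add.assoc simp del: split_paired_All split_paired_Ex)

lemma opposite_not_edge: "\<not> edge x (x + (1,1))" "x \<noteq> x + (1,1)"
  by (simp_all add: edge_iff prod_eq_iff)

lemma Fset_non_edge_eq_opposite:
  assumes "\<not> edge x z" "x \<noteq> z" "y \<in> Fset x z"
  shows "z = x + (1,1)"
  using assms by (auto simp: Fset_eq split: if_splits)

definition zb_contract :: "(pt \<Rightarrow> 'a::field) \<Rightarrow> (pt \<Rightarrow> 'a) \<Rightarrow> pt \<Rightarrow> pt \<Rightarrow> pt \<Rightarrow> pt \<Rightarrow> 'a" where
  "zb_contract T1 T2 x y u v = (\<Sum>a\<in>{1,2}. zbinv T1 T2 a x y * zb T1 T2 a u v)"

lemma piterm_antisymmetrizer: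
  "piterm T1 T2 antisymmetrizer x y z y' z' =
     (zb_contract T1 T2 x y x y' * zb_contract T1 T2 y z y' z'
      - zb_contract T1 T2 x y y' z' * zb_contract T1 T2 y z x y') / 2"
  unfolding piterm_def antisymmetrizer_def zb_contract_def by (simp add: algebra_simps)

lemma zb_contract_eq:
  "zb_contract T1 T2 x y u v =
     (if y = x + (1,0) \<and> v = u + (1,0) then T1 x / T1 u
      else if y = x + (0,1) \<and> v = u + (0,1) then T2 x / T2 u else 0)"
  unfolding zb_contract_def zb_def zbinv_def by (auto simp: field_simps)

lemma zb_contract_nonzero_imp_diff_eq:
  "zb_contract T1 T2 x y u v \<noteq> 0 \<Longrightarrow> v - u = y - x"
  unfolding zb_contract_eq by (auto split: if_splits)

lemma piterm_antisymmetrizer_eq_0: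
  assumes "z \<noteq> z'"
  shows "piterm T1 T2 antisymmetrizer x y z y' z' = 0"
proof (rule ccontr)
  assume "piterm T1 T2 antisymmetrizer x y z y' z' \<noteq> 0"
  then consider
      "zb_contract T1 T2 x y x y' \<noteq> 0" "zb_contract T1 T2 y z y' z' \<noteq> 0"
    | "zb_contract T1 T2 x y y' z' \<noteq> 0" "zb_contract T1 T2 y z x y' \<noteq> 0"
    unfolding piterm_antisymmetrizer by fastforce
  then have "z' = z"
    by cases (auto dest!: zb_contract_nonzero_imp_diff_eq simp: algebra_simps)
  with assms show False by simp
qed

lemma cond_i_antisymmetrizer: "cond_i T1 T2 antisymmetrizer"
  unfolding cond_i_def by (simp add: piterm_antisymmetrizer_eq_0)

lemma sum_Fset_piterm_antisymmetrizer_eq_0_iff: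
  fixes T1 T2 :: "pt \<Rightarrow> 'a::field_char_0"
  assumes T1: "\<And>u. T1 u \<noteq> 0" and T2: "\<And>u. T2 u \<noteq> 0" and y': "y' \<in> Fset x (x + (1,1))"
  shows "(\<Sum>y\<in>Fset x (x + (1,1)). piterm T1 T2 antisymmetrizer x y (x + (1,1)) y' (x + (1,1))) = 0
    \<longleftrightarrow> T1 x * T2 (x + (1,0)) = T2 x * T1 (x + (0,1))"
    (is "?S y' = 0 \<longleftrightarrow> ?r = ?s")
proof -
  have "?S (x + (1,0)) = (1 - ?s / ?r) / 2"
    using T1 T2 by (simp add: Fset_eq piterm_antisymmetrizer zb_contract_eq add.assoc pt_add_twice)
  moreover have "?S (x + (0,1)) = (1 - ?r / ?s) / 2"
    using T1 T2 by (simp add: Fset_eq piterm_antisymmetrizer zb_contract_eq add.assoc pt_add_twice)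
  moreover have "?r \<noteq> 0" "?s \<noteq> 0"
    using T1 T2 by simp_all
  moreover have "y' = x + (1,0) \<or> y' = x + (0,1)"
    using y' by (simp add: Fset_eq)
  ultimately show ?thesis
    by (auto simp: field_simps)
qed

lemma cond_ii_antisymmetrizer_iff:
  fixes T1 T2 :: "pt \<Rightarrow> 'a::field_char_0"
  assumes T1: "\<And>u. T1 u \<noteq> 0" and T2: "\<And>u. T2 u \<noteq> 0"
  shows "cond_ii T1 T2 antisymmetrizer \<longleftrightarrow> (\<forall>x. T1 x * T2 (x + (1,0)) = T2 x * T1 (x + (0,1)))"
  unfolding cond_ii_def
proof (intro iffI allI impI ballI)
  fix x
  assume "\<forall>x z. \<not> edge x z \<and> x \<noteq> z \<longrightarrow>
    (\<forall>y'\<in>Fset x z. (\<Sum>y\<in>Fset x z. piterm T1 T2 antisymmetrizer x y z y' z) = 0)"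
  moreover have y': "x + (1,0) \<in> Fset x (x + (1,1))"
    by (simp add: Fset_eq)
  ultimately have "(\<Sum>y\<in>Fset x (x + (1,1)).
      piterm T1 T2 antisymmetrizer x y (x + (1,1)) (x + (1,0)) (x + (1,1))) = 0"
    using opposite_not_edge by blast
  then show "T1 x * T2 (x + (1,0)) = T2 x * T1 (x + (0,1))"
    using sum_Fset_piterm_antisymmetrizer_eq_0_iff[of T1 T2, OF T1 T2 y'] by blast
next
  fix x z y'
  assume flat: "\<forall>x. T1 x * T2 (x + (1,0)) = T2 x * T1 (x + (0,1))"
    and "\<not> edge x z \<and> x \<noteq> z" and "y' \<in> Fset x z"
  then have "z = x + (1,1)" and y': "y' \<in> Fset x (x + (1,1))"
    using Fset_non_edge_eq_opposite by blast+
  then show "(\<Sum>y\<in>Fset x z. piterm T1 T2 antisymmetrizer x y z y' z) = 0"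
    using sum_Fset_piterm_antisymmetrizer_eq_0_iff[of T1 T2, OF T1 T2 y'] flat by blast
qed

theorem mainTheorem10:
  fixes T1 T2 :: "pt \<Rightarrow> 'a::field_char_0"
  assumes "\<forall>x. T1 x \<noteq> 0" and "\<forall>x. T2 x \<noteq> 0"
  shows "(cond_i T1 T2 antisymmetrizer \<and> cond_ii T1 T2 antisymmetrizer) \<longleftrightarrow>
         (\<forall>x. T1 x * T2 (x + (1,0)) = T2 x * T1 (x + (0,1)))"
proof -
  have "cond_ii T1 T2 antisymmetrizer \<longleftrightarrow> (\<forall>x. T1 x * T2 (x + (1,0)) = T2 x * T1 (x + (0,1)))"
    using assms by (intro cond_ii_antisymmetrizer_iff) blast+
  then show ?thesis
    using cond_i_antisymmetrizer by blast
qed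

end
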